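(* Let $u=\sum_{i,j=1}^4 q_{i,j}\,e_i\otimes e_j$ be a positive element of $\mathcal V\otimes_{\max}\mathcal V$. For $a,c\in\{0,2\}$ and $j,k\in\{1,2\}$ set $S_{a,c}(j,k)=\min_{b\in\{0,2\}}\sum_{i=1}^2\sqrt{q_{b+i,a+j}}\sqrt{q_{b+i,c+k}}$. Then for each $d\in\{0,2\}$, $\sum_{i,j=1}^2 q_{d+i,d+j}\le\min_{a,c\in\{0,2\}}\sum_{j,k=1}^2 S_{a,c}(j,k)$.
   Context: $e_1,\dots,e_4$ is the standard basis of $\ell^\infty_4$, and $\mathcal V=\{(a,b,c,d)\in\ell^\infty_4: a+b=c+d\}$ is an operator subsystem of $\ell^\infty_4$; elements of $\mathcal V\otimes\mathcal V\subseteq\ell^\infty_4\otimes\ell^\infty_4$ are written uniquely as $\sum q_{i,j}e_i\otimes e_j$ (positive elements have $q_{i,j}\ge0$). $\otimes_{\max}$ is the maximal operator system tensor product, whose cones are the Archimedeanization of $\{A^*(P\otimes Q)A: P\in M_k(\mathcal V)_+, Q\in M_m(\mathcal V)_+, A \text{ scalar}\}$. *)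

theory Defs
  imports Complex_Main
begin

(* Elements of l^infty_4 are functions nat => complex, only indices 1..4 matter. *)
definition inV :: "(nat \<Rightarrow> complex) \<Rightarrow> bool" where
  "inV v \<longleftrightarrow> v 1 + v 2 = v 3 + v 4"

definition psd :: "nat \<Rightarrow> (nat \<Rightarrow> nat \<Rightarrow> complex) \<Rightarrow> bool" where
  "psd k M \<longleftrightarrow> (\<forall>x :: nat \<Rightarrow> complex.
     Im (\<Sum>p<k. \<Sum>p'<k. cnj (x p) * M p p' * x p') = 0 \<and>
     Re (\<Sum>p<k. \<Sum>p'<k. cnj (x p) * M p p' * x p') \<ge> 0)"

(* P \<in> M_k(V)_+ : entries in V, positive in M_k(l^infty_4) = (M_k)^4 *)
definition MkV_pos :: "nat \<Rightarrow> (nat \<Rightarrow> nat \<Rightarrow> nat \<Rightarrow> complex) \<Rightarrow> bool" where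
  "MkV_pos k P \<longleftrightarrow> (\<forall>p<k. \<forall>p'<k. inV (P p p')) \<and>
                   (\<forall>i\<in>{1..4}. psd k (\<lambda>p p'. P p p' i))"

(* Elements of l^infty_4 \<otimes> l^infty_4 as arrays w i j (coefficient of e_i \<otimes> e_j) *)
definition in_VV :: "(nat \<Rightarrow> nat \<Rightarrow> complex) \<Rightarrow> bool" where
  "in_VV w \<longleftrightarrow> (\<forall>j\<in>{1..4}. inV (\<lambda>i. w i j)) \<and> (\<forall>i\<in>{1..4}. inV (w i))"

(* level-1 cone {A^*(P \<otimes> Q)A} before Archimedeanization; A is a km x 1 scalar matrix *)
definition max_D :: "(nat \<Rightarrow> nat \<Rightarrow> complex) set" where
  "max_D = {w. \<exists>k m P Q (\<alpha> :: nat \<Rightarrow> nat \<Rightarrow> complex). MkV_pos k P \<and> MkV_pos m Q \<and>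
     (\<forall>i\<in>{1..4}. \<forall>j\<in>{1..4}. w i j =
        (\<Sum>p<k. \<Sum>r<m. \<Sum>p'<k. \<Sum>r'<m.
            cnj (\<alpha> p r) * \<alpha> p' r' * P p p' i * Q r r' j))}"

(* positive elements of V \<otimes>_max V (Archimedeanization; unit is e \<otimes> e = all-ones array) *)
definition max_pos :: "(nat \<Rightarrow> nat \<Rightarrow> complex) \<Rightarrow> bool" where
  "max_pos w \<longleftrightarrow> in_VV w \<and> (\<forall>i\<in>{1..4}. \<forall>j\<in>{1..4}. cnj (w i j) = w i j) \<and>
     (\<forall>\<epsilon>>0. (\<lambda>i j. w i j + complex_of_real \<epsilon>) \<in> max_D)"

definition S :: "(nat \<Rightarrow> nat \<Rightarrow> real) \<Rightarrow> nat \<Rightarrow> nat \<Rightarrow> nat \<Rightarrow> nat \<Rightarrow> real" where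
  "S q a c j k = Min {(\<Sum>i\<in>{1,2}. sqrt (q (b+i) (a+j)) * sqrt (q (b+i) (c+k))) | b. b \<in> {0,2::nat}}"

end

theory Submission
  imports Defs "Jordan_Normal_Form.Determinant"
begin

(* Up to an arbitrarily small shift by the order unit, q is the coefficient array of
   A*(P (x) Q)A, i.e. q i j = Re <P_i, Q_j>_alpha for a bilinear "pairing" of k x k and
   m x m matrix families P, Q with psd members P_1..P_4, Q_1..Q_4 and
   P_1 + P_2 = P_3 + P_4, Q_1 + Q_2 = Q_3 + Q_4 (membership in V).
   Adding a small multiple of the identity to every Q_j makes E = Q_1 + Q_2
   invertible, with inverse Y.  Then E = E Y E = sum_{j,l} Q_(a+j) Y Q_(c+l), and each
   Q Y Q is dominated by Q, so a Cauchy-Schwarz inequality bounds every block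
   <P_(b+i), Q_(a+j) Y Q_(c+l)> by sqrt q_(b+i,a+j) * sqrt q_(b+i,c+l); since
   P_(b+1) + P_(b+2) does not depend on b, this yields the inequality for the
   perturbed array.  Letting the perturbation tend to 0 (S is continuous) finishes. *)

section \<open>Matrices as index-bounded arrays\<close>

text \<open>Vectors are functions \<open>nat \<Rightarrow> complex\<close> and n x n matrices are functions
  \<open>nat \<Rightarrow> nat \<Rightarrow> complex\<close>; only indices below n matter.\<close>

definition cinner :: "nat \<Rightarrow> (nat\<Rightarrow>complex) \<Rightarrow> (nat\<Rightarrow>complex) \<Rightarrow> complex" where
  "cinner n x y = (\<Sum>p<n. cnj (x p) * y p)"
definition mvec :: "nat \<Rightarrow> (nat\<Rightarrow>nat\<Rightarrow>complex) \<Rightarrow> (nat\<Rightarrow>complex) \<Rightarrow> nat \<Rightarrow> complex" where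
  "mvec n A x = (\<lambda>p. \<Sum>l<n. A p l * x l)"
definition mmul :: "nat \<Rightarrow> (nat\<Rightarrow>nat\<Rightarrow>complex) \<Rightarrow> (nat\<Rightarrow>nat\<Rightarrow>complex) \<Rightarrow> nat\<Rightarrow>nat\<Rightarrow>complex" where
  "mmul n A B = (\<lambda>i j. \<Sum>l<n. A i l * B l j)"
definition hermitian :: "nat \<Rightarrow> (nat\<Rightarrow>nat\<Rightarrow>complex) \<Rightarrow> bool" where
  "hermitian n A \<longleftrightarrow> (\<forall>p<n. \<forall>q<n. A q p = cnj (A p q))"
definition qform :: "nat \<Rightarrow> (nat\<Rightarrow>nat\<Rightarrow>complex) \<Rightarrow> (nat\<Rightarrow>complex) \<Rightarrow> complex" where
  "qform n A x = cinner n x (mvec n A x)"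
definition ebasis :: "nat \<Rightarrow> nat \<Rightarrow> complex" where
  "ebasis a = (\<lambda>p. if p = a then 1 else 0)"
definition idmat :: "nat \<Rightarrow> nat \<Rightarrow> complex" where
  "idmat r r' = (if r = r' then 1 else 0)"

definition right_inverse :: "nat \<Rightarrow> (nat\<Rightarrow>nat\<Rightarrow>complex) \<Rightarrow> (nat\<Rightarrow>nat\<Rightarrow>complex) \<Rightarrow> bool" where
  "right_inverse n E Y \<longleftrightarrow> (\<forall>r<n. \<forall>r'<n. mmul n E Y r r' = idmat r r')"

lemma qform_sum: "(\<Sum>p<n. \<Sum>p'<n. cnj (x p) * A p p' * x p') = qform n A x"
  unfolding qform_def cinner_def mvec_def by (simp add: sum_distrib_left mult.assoc)

lemma psd_iff: "psd n A \<longleftrightarrow> (\<forall>x. Im (qform n A x) = 0 \<and> Re (qform n A x) \<ge> 0)"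
  unfolding psd_def qform_sum ..

lemma cinner_add_left: "cinner n (\<lambda>p. x p + y p) z = cinner n x z + cinner n y z"
  unfolding cinner_def by (simp add: algebra_simps sum.distrib)
lemma cinner_add_right: "cinner n z (\<lambda>p. x p + y p) = cinner n z x + cinner n z y"
  unfolding cinner_def by (simp add: algebra_simps sum.distrib)
lemma cinner_diff_left: "cinner n (\<lambda>p. x p - y p) z = cinner n x z - cinner n y z"
  unfolding cinner_def by (simp add: algebra_simps sum_subtractf)
lemma cinner_diff_right: "cinner n z (\<lambda>p. x p - y p) = cinner n z x - cinner n z y"
  unfolding cinner_def by (simp add: algebra_simps sum_subtractf)
lemma cinner_scale_left: "cinner n (\<lambda>p. c * x p) z = cnj c * cinner n x z"
  unfolding cinner_def by (simp add: algebra_simps sum_distrib_left)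
lemma cinner_scale_right: "cinner n z (\<lambda>p. c * x p) = c * cinner n z x"
  unfolding cinner_def by (simp add: algebra_simps sum_distrib_left)
lemma cinner_cnj: "cinner n y x = cnj (cinner n x y)"
  unfolding cinner_def by (simp add: mult.commute)
lemma cinner_self: "cinner n x x = of_real (\<Sum>p<n. (cmod (x p))^2)"
  unfolding cinner_def of_real_sum
  by (rule sum.cong[OF refl]) (subst complex_norm_square, rule mult.commute)
lemma cinner_cong:
  "(\<And>p. p < n \<Longrightarrow> x p = x' p) \<Longrightarrow> (\<And>p. p < n \<Longrightarrow> y p = y' p) \<Longrightarrow> cinner n x y = cinner n x' y'"
  unfolding cinner_def by simp

lemma mvec_add_vec: "mvec n A (\<lambda>p. x p + y p) = (\<lambda>p. mvec n A x p + mvec n A y p)"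
  unfolding mvec_def by (simp add: algebra_simps sum.distrib)
lemma mvec_diff_vec: "mvec n A (\<lambda>p. x p - y p) = (\<lambda>p. mvec n A x p - mvec n A y p)"
  unfolding mvec_def by (simp add: algebra_simps sum_subtractf)
lemma mvec_scale_vec: "mvec n A (\<lambda>p. c * x p) = (\<lambda>p. c * mvec n A x p)"
  unfolding mvec_def by (simp add: algebra_simps sum_distrib_left)
lemma mvec_add_mat: "mvec n (\<lambda>i j. A i j + B i j) x = (\<lambda>p. mvec n A x p + mvec n B x p)"
  unfolding mvec_def by (simp add: algebra_simps sum.distrib)
lemma mvec_diff_mat: "mvec n (\<lambda>i j. A i j - B i j) x = (\<lambda>p. mvec n A x p - mvec n B x p)"
  unfolding mvec_def by (simp add: algebra_simps sum_subtractf)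
lemma mvec_scale_mat: "mvec n (\<lambda>i j. c * A i j) x = (\<lambda>p. c * mvec n A x p)"
  unfolding mvec_def by (simp add: algebra_simps sum_distrib_left)

lemma mvec_mmul: "mvec n (mmul n A B) x = mvec n A (mvec n B x)"
proof (rule ext)
  fix p
  have "mvec n (mmul n A B) x p = (\<Sum>l<n. \<Sum>l'<n. A p l' * B l' l * x l)"
    unfolding mvec_def mmul_def by (simp add: sum_distrib_right)
  also have "\<dots> = (\<Sum>l'<n. \<Sum>l<n. A p l' * B l' l * x l)" by (rule sum.swap)
  also have "\<dots> = mvec n A (mvec n B x) p"
    unfolding mvec_def by (simp add: sum_distrib_left mult.assoc)
  finally show "mvec n (mmul n A B) x p = mvec n A (mvec n B x) p" .
qed

lemma mmul_add_left: assumes "\<And>l. l < n \<Longrightarrow> A r l = A1 r l + A2 r l"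
  shows "mmul n A B r j = mmul n A1 B r j + mmul n A2 B r j"
  unfolding mmul_def using assms by (simp add: distrib_right sum.distrib)

lemma mmul_add_right: assumes "\<And>l. l < n \<Longrightarrow> B l j = B1 l j + B2 l j"
  shows "mmul n A B r j = mmul n A B1 r j + mmul n A B2 r j"
  unfolding mmul_def using assms by (simp add: distrib_left sum.distrib)

lemma qform_add_mat: "qform n (\<lambda>i j. A i j + B i j) x = qform n A x + qform n B x"
  unfolding qform_def mvec_add_mat cinner_add_right ..
lemma qform_diff_mat: "qform n (\<lambda>i j. A i j - B i j) x = qform n A x - qform n B x"
  unfolding qform_def mvec_diff_mat cinner_diff_right ..
lemma qform_scale_mat: "qform n (\<lambda>i j. c * A i j) x = c * qform n A x"
  unfolding qform_def mvec_scale_mat cinner_scale_right ..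
lemma qform_cong_mat: assumes "\<And>i j. i < n \<Longrightarrow> j < n \<Longrightarrow> E i j = A i j"
  shows "qform n E x = qform n A x"
  unfolding qform_def mvec_def by (rule cinner_cong) (auto simp: assms intro!: sum.cong)

lemma qform_idmat: "qform m idmat x = cinner m x x"
  unfolding qform_def
proof (rule cinner_cong)
  fix p assume p: "p < m"
  have "mvec m idmat x p = (\<Sum>l<m. if l = p then x l else 0)"
    unfolding mvec_def idmat_def by (rule sum.cong) auto
  thus "mvec m idmat x p = x p" using p by simp
qed simp

lemma mvec_ebasis: "a < n \<Longrightarrow> mvec n A (ebasis a) = (\<lambda>p. A p a)"
  unfolding mvec_def ebasis_def by (auto simp: if_distrib cong: if_cong)
lemma cinner_ebasis: assumes a: "a < n" shows "cinner n (ebasis a) y = y a"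
proof -
  have "cinner n (ebasis a) y = (\<Sum>p<n. if p = a then y p else 0)"
    unfolding cinner_def ebasis_def by (rule sum.cong) auto
  thus ?thesis using a by simp
qed

lemma qform_one: assumes "a < n" shows "qform n A (ebasis a) = A a a"
  unfolding qform_def using assms by (simp add: mvec_ebasis cinner_ebasis)

lemma qform_two: assumes "a < n" "b < n"
  shows "qform n A (\<lambda>p. ebasis a p + c * ebasis b p)
       = A a a + c * A a b + cnj c * A b a + cnj c * c * A b b"
  unfolding qform_def mvec_add_vec mvec_scale_vec cinner_add_left cinner_add_right
    cinner_scale_left cinner_scale_right
  using assms by (simp add: mvec_ebasis cinner_ebasis algebra_simps)

lemma hermitian_cnj: "hermitian n A \<Longrightarrow> p < n \<Longrightarrow> q < n \<Longrightarrow> A q p = cnj (A p q)"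
  unfolding hermitian_def by blast

lemma hermitian_cinner: assumes "hermitian n A"
  shows "cinner n (mvec n A x) y = cinner n x (mvec n A y)"
proof -
  have "cinner n (mvec n A x) y = (\<Sum>p<n. \<Sum>l<n. cnj (A p l) * cnj (x l) * y p)"
    unfolding cinner_def mvec_def by (simp add: sum_distrib_right)
  also have "\<dots> = (\<Sum>l<n. \<Sum>p<n. cnj (A p l) * cnj (x l) * y p)"
    by (rule sum.swap)
  also have "\<dots> = (\<Sum>l<n. \<Sum>p<n. cnj (x l) * (A l p * y p))"
  proof (intro sum.cong refl)
    fix l p assume "l \<in> {..<n}" "p \<in> {..<n}"
    hence "cnj (A p l) = A l p" using hermitian_cnj[OF assms] by (metis complex_cnj_cnj lessThan_iff)
    thus "cnj (A p l) * cnj (x l) * y p = cnj (x l) * (A l p * y p)" by simp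
  qed
  also have "\<dots> = cinner n x (mvec n A y)"
    unfolding cinner_def mvec_def by (simp only: sum_distrib_left)
  finally show ?thesis .
qed

lemma qform_sandwich: assumes "hermitian n A"
  shows "qform n (mmul n (mmul n A Y) B) x = cinner n (mvec n A x) (mvec n Y (mvec n B x))"
  unfolding qform_def mvec_mmul hermitian_cinner[OF assms] ..

section \<open>Positive semidefinite matrices\<close>

lemma psd_qform: "psd n A \<Longrightarrow> Im (qform n A x) = 0 \<and> Re (qform n A x) \<ge> 0"
  unfolding psd_iff by blast

lemma psd_diag: assumes "psd n A" "a < n" shows "Im (A a a) = 0" "Re (A a a) \<ge> 0"
  using psd_qform[OF assms(1), of "ebasis a"] qform_one[OF assms(2), of A] by auto

text \<open>Over the complex numbers positivity of the quadratic form forces hermitian symmetry;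
  this is read off from the vectors \<open>e\<^sub>p + e\<^sub>q\<close> and \<open>e\<^sub>p + i e\<^sub>q\<close>.\<close>
lemma psd_hermitian: assumes "psd n A" shows "hermitian n A"
  unfolding hermitian_def
proof (intro allI impI)
  fix p q assume p: "p < n" and q: "q < n"
  show "A q p = cnj (A p q)"
  proof (cases "p = q")
    case True thus ?thesis using psd_diag[OF assms p] by (simp add: complex_eq_iff)
  next
    case False
    have h1: "Im (A p p + 1 * A p q + cnj 1 * A q p + cnj 1 * 1 * A q q) = 0"
      using psd_qform[OF assms, of "\<lambda>r. ebasis p r + 1 * ebasis q r"] qform_two[OF p q, of A 1] by simp
    have h2: "Im (A p p + \<i> * A p q + cnj \<i> * A q p + cnj \<i> * \<i> * A q q) = 0"
      using psd_qform[OF assms, of "\<lambda>r. ebasis p r + \<i> * ebasis q r"] qform_two[OF p q, of A \<i>] by simp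
    have "Im (A p p) = 0" "Im (A q q) = 0" using psd_diag[OF assms] p q by auto
    with h1 h2 show ?thesis by (simp add: complex_eq_iff)
  qed
qed

lemma psd_diag_zero: assumes "psd n A" "a < n" "b < n" "A a a = 0" shows "A a b = 0"
proof (rule ccontr)
  assume nz: "A a b \<noteq> 0"
  define z where "z = A a b"
  define N where "N = (cmod z)^2"
  have Npos: "N > 0" using nz unfolding N_def z_def by simp
  have zz: "cnj z * z = of_real N" "z * cnj z = of_real N"
    unfolding N_def complex_norm_square by (simp_all add: mult.commute)
  have hba: "A b a = cnj z" using hermitian_cnj[OF psd_hermitian[OF assms(1)] assms(2,3)] z_def by simp
  define t where "t = (Re (A b b) + 1) / (2 * N)"
  define c where "c = - (of_real t * z)"
  have "Re (qform n A (\<lambda>r. ebasis b r + c * ebasis a r)) \<ge> 0" using psd_qform[OF assms(1)] by blast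
  also have "qform n A (\<lambda>r. ebasis b r + c * ebasis a r) = A b b + c * A b a + cnj c * A a b + cnj c * c * A a a"
    by (rule qform_two[OF assms(3,2)])
  also have "\<dots> = A b b - of_real (2 * t * N)"
    using zz assms(4) unfolding c_def hba z_def[symmetric] by (simp add: algebra_simps)
  finally have "Re (A b b) - 2 * t * N \<ge> 0" by simp
  moreover have "2 * t * N = Re (A b b) + 1" unfolding t_def using Npos by simp
  ultimately show False by simp
qed

lemma psd_add: "psd n A \<Longrightarrow> psd n B \<Longrightarrow> psd n (\<lambda>i j. A i j + B i j)"
  unfolding psd_iff qform_add_mat by simp

lemma psd_cong: assumes "psd n A" "\<And>i j. i < n \<Longrightarrow> j < n \<Longrightarrow> E i j = A i j" shows "psd n E"
  using assms(1) qform_cong_mat[OF assms(2)] unfolding psd_iff by simp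

lemma psd_scaled_idmat: assumes "t \<ge> 0" shows "psd m (\<lambda>r r'. of_real t * idmat r r')"
  unfolding psd_iff qform_scale_mat qform_idmat cinner_self using assms by (simp add: sum_nonneg)

lemma qform_shift: assumes "hermitian n A" "a < n"
  shows "qform n A (\<lambda>r. x r - \<mu> * ebasis a r)
       = qform n A x - \<mu> * cnj (mvec n A x a) - cnj \<mu> * mvec n A x a + cnj \<mu> * \<mu> * A a a"
proof -
  have e1: "cinner n x (mvec n A (ebasis a)) = cnj (mvec n A x a)"
  proof -
    have "cinner n x (mvec n A (ebasis a)) = cinner n (mvec n A x) (ebasis a)"
      using hermitian_cinner[OF assms(1)] by simp
    also have "\<dots> = cnj (cinner n (ebasis a) (mvec n A x))" by (rule cinner_cnj)
    finally show ?thesis using cinner_ebasis[OF assms(2)] by simp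
  qed
  show ?thesis
    unfolding qform_def mvec_diff_vec mvec_scale_vec cinner_diff_left cinner_diff_right
      cinner_scale_left cinner_scale_right
    using e1 assms(2) by (simp add: cinner_ebasis mvec_ebasis algebra_simps)
qed

lemma schur_complement_psd: assumes A: "psd n A" and a: "a < n" and d: "A a a \<noteq> 0"
  shows "psd n (\<lambda>\<rho> \<rho>'. A \<rho> \<rho>' - A \<rho> a * A a \<rho>' / A a a)"
  unfolding psd_iff
proof
  fix x
  define g where "g = mvec n A x a"
  define dd where "dd = A a a"
  have cd: "cnj dd = dd" using psd_diag[OF A a] unfolding dd_def by (simp add: complex_eq_iff)
  have mvB: "mvec n (\<lambda>\<rho> \<rho>'. A \<rho> a * A a \<rho>' / A a a) x = (\<lambda>\<rho>. (g / dd) * A \<rho> a)"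
    unfolding mvec_def g_def dd_def by (rule ext) (simp add: sum_distrib_left sum_divide_distrib mult_ac)
  have e1: "cinner n x (\<lambda>\<rho>. A \<rho> a) = cnj g"
  proof -
    have "cinner n x (\<lambda>\<rho>. A \<rho> a) = cinner n x (mvec n A (ebasis a))" using mvec_ebasis[OF a] by simp
    also have "\<dots> = cinner n (mvec n A x) (ebasis a)" using hermitian_cinner[OF psd_hermitian[OF A]] by simp
    also have "\<dots> = cnj (cinner n (ebasis a) (mvec n A x))" by (rule cinner_cnj)
    finally show ?thesis using cinner_ebasis[OF a] g_def by simp
  qed
  have "qform n (\<lambda>\<rho> \<rho>'. A \<rho> \<rho>' - A \<rho> a * A a \<rho>' / A a a) x = qform n A x - (g / dd) * cnj g"
    unfolding qform_diff_mat unfolding qform_def mvB cinner_scale_right e1 ..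
  also have "\<dots> = qform n A (\<lambda>r. x r - (g/dd) * ebasis a r)"
    unfolding qform_shift[OF psd_hermitian[OF A] a] g_def[symmetric] dd_def[symmetric]
    using d unfolding dd_def[symmetric] by (simp add: cd field_simps)
  finally show "Im (qform n (\<lambda>\<rho> \<rho>'. A \<rho> \<rho>' - A \<rho> a * A a \<rho>' / A a a) x) = 0 \<and>
      0 \<le> Re (qform n (\<lambda>\<rho> \<rho>'. A \<rho> \<rho>' - A \<rho> a * A a \<rho>' / A a a) x)"
    using psd_qform[OF A] by simp
qed

definition vanishes_before :: "nat \<Rightarrow> nat \<Rightarrow> (nat\<Rightarrow>nat\<Rightarrow>complex) \<Rightarrow> bool" where
  "vanishes_before n j A \<longleftrightarrow> (\<forall>\<rho><n. \<forall>\<rho>'<n. (\<rho> < j \<or> \<rho>' < j) \<longrightarrow> A \<rho> \<rho>' = 0)"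

lemma vanishes_before_zero_pivot:
  assumes A: "psd n A" and j: "j < n" and pivot: "A j j = 0" and van: "vanishes_before n j A"
  shows "vanishes_before n (Suc j) A"
proof -
  have row: "A j \<rho> = 0" if r: "\<rho> < n" for \<rho> using psd_diag_zero[OF A j r pivot] .
  have col: "A \<rho> j = 0" if r: "\<rho> < n" for \<rho>
    using hermitian_cnj[OF psd_hermitian[OF A] j r] row[OF r] by simp
  show ?thesis using van row col unfolding vanishes_before_def by (metis less_Suc_eq)
qed

lemma vanishes_before_schur:
  assumes j: "j < n" and pivot: "A j j \<noteq> 0" and van: "vanishes_before n j A"
  shows "vanishes_before n (Suc j) (\<lambda>\<rho> \<rho>'. A \<rho> \<rho>' - A \<rho> j * A j \<rho>' / A j j)"
  unfolding vanishes_before_def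
proof (intro allI impI)
  fix \<rho> \<rho>' assume r: "\<rho> < n" "\<rho>' < n" "\<rho> < Suc j \<or> \<rho>' < Suc j"
  show "A \<rho> \<rho>' - A \<rho> j * A j \<rho>' / A j j = 0"
  proof (cases "\<rho> < j \<or> \<rho>' < j")
    case True
    hence "A \<rho> \<rho>' = 0" "A \<rho> j = 0 \<or> A j \<rho>' = 0" using van r(1,2) j unfolding vanishes_before_def by blast+
    thus ?thesis by auto
  next
    case False
    hence "\<rho> = j \<or> \<rho>' = j" using r(3) by auto
    thus ?thesis using pivot by auto
  qed
qed

lemma pivot_rank_one:
  assumes A: "psd n A" and j: "j < n" and r: "\<rho>' < n"
  shows "A \<rho> j * A j \<rho>' / A j j
       = A \<rho> j / of_real (sqrt (Re (A j j))) * cnj (A \<rho>' j / of_real (sqrt (Re (A j j))))"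
proof -
  have "A j j = of_real (Re (A j j))" using psd_diag[OF A j] by (simp add: complex_eq_iff)
  moreover have "sqrt (Re (A j j)) * sqrt (Re (A j j)) = Re (A j j)" using psd_diag(2)[OF A j] by simp
  ultimately have "of_real (sqrt (Re (A j j))) * of_real (sqrt (Re (A j j))) = A j j" by (metis of_real_mult)
  moreover have "A j \<rho>' = cnj (A \<rho>' j)" by (rule hermitian_cnj[OF psd_hermitian[OF A] r j])
  ultimately show ?thesis by (metis complex_cnj_divide complex_cnj_complex_of_real times_divide_times_eq)
qed

text \<open>Induction on \<open>n - j\<close>: a zero pivot is
  skipped, a nonzero pivot \<open>A\<^sub>j\<^sub>j\<close> contributes \<open>z\<^sub>j = A e\<^sub>j / \<surd>A\<^sub>j\<^sub>j\<close> and leaves the Schur complement.\<close>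
lemma psd_gram_factorization_from:
  "psd n A \<Longrightarrow> j \<le> n \<Longrightarrow> vanishes_before n j A \<Longrightarrow>
   \<exists>z. \<forall>\<rho><n. \<forall>\<rho>'<n. A \<rho> \<rho>' = (\<Sum>t\<in>{j..<n}. z t \<rho> * cnj (z t \<rho>'))"
proof (induction "n - j" arbitrary: j A)
  case 0
  hence "j = n" by simp
  thus ?case using 0 by (auto simp: vanishes_before_def)
next
  case (Suc dd)
  have jn: "j < n" using Suc by simp
  have IH: "\<And>B. psd n B \<Longrightarrow> vanishes_before n (Suc j) B \<Longrightarrow>
      \<exists>z. \<forall>\<rho><n. \<forall>\<rho>'<n. B \<rho> \<rho>' = (\<Sum>t\<in>{Suc j..<n}. z t \<rho> * cnj (z t \<rho>'))"
    using Suc.hyps(1)[of "Suc j"] Suc.hyps(2) jn by auto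
  have split: "\<And>f. (\<Sum>t\<in>{j..<n}. f t) = f j + (\<Sum>t\<in>{Suc j..<n}. f t)"
    using jn by (simp add: sum.atLeast_Suc_lessThan)
  show ?case
  proof (cases "A j j = 0")
    case True
    obtain z where z: "\<forall>\<rho><n. \<forall>\<rho>'<n. A \<rho> \<rho>' = (\<Sum>t\<in>{Suc j..<n}. z t \<rho> * cnj (z t \<rho>'))"
      using IH[OF Suc.prems(1) vanishes_before_zero_pivot[OF Suc.prems(1) jn True Suc.prems(3)]] by blast
    define z' where "z' = z(j := (\<lambda>_. 0))"
    have "(\<Sum>t\<in>{Suc j..<n}. z' t \<rho> * cnj (z' t \<rho>')) = (\<Sum>t\<in>{Suc j..<n}. z t \<rho> * cnj (z t \<rho>'))"
      for \<rho> \<rho>' unfolding z'_def by (rule sum.cong) auto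
    hence "\<forall>\<rho><n. \<forall>\<rho>'<n. A \<rho> \<rho>' = (\<Sum>t\<in>{j..<n}. z' t \<rho> * cnj (z' t \<rho>'))"
      unfolding split using z by (simp add: z'_def)
    thus ?thesis by blast
  next
    case False
    define B where "B = (\<lambda>\<rho> \<rho>'. A \<rho> \<rho>' - A \<rho> j * A j \<rho>' / A j j)"
    obtain z where z: "\<forall>\<rho><n. \<forall>\<rho>'<n. B \<rho> \<rho>' = (\<Sum>t\<in>{Suc j..<n}. z t \<rho> * cnj (z t \<rho>'))"
      using IH[OF schur_complement_psd[OF Suc.prems(1) jn False] vanishes_before_schur[OF jn False Suc.prems(3)]]
      unfolding B_def by blast
    define w where "w = (\<lambda>\<rho>. A \<rho> j / of_real (sqrt (Re (A j j))))"
    define z' where "z' = z(j := w)"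
    have "A \<rho> \<rho>' = (\<Sum>t\<in>{j..<n}. z' t \<rho> * cnj (z' t \<rho>'))" if r: "\<rho> < n" "\<rho>' < n" for \<rho> \<rho>'
    proof -
      have e1: "z' j \<rho> * cnj (z' j \<rho>') = A \<rho> j * A j \<rho>' / A j j"
        unfolding z'_def w_def by (simp add: pivot_rank_one[OF Suc.prems(1) jn r(2)])
      have e2: "(\<Sum>t\<in>{Suc j..<n}. z' t \<rho> * cnj (z' t \<rho>')) = (\<Sum>t\<in>{Suc j..<n}. z t \<rho> * cnj (z t \<rho>'))"
        unfolding z'_def by (rule sum.cong) auto
      have "B \<rho> \<rho>' = (\<Sum>t\<in>{Suc j..<n}. z t \<rho> * cnj (z t \<rho>'))" using z r by blast
      thus ?thesis unfolding split e1 e2 B_def by (metis diff_add_cancel add.commute)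
    qed
    thus ?thesis by blast
  qed
qed

lemma psd_gram_factorization:
  "psd n A \<Longrightarrow> \<exists>z. \<forall>\<rho><n. \<forall>\<rho>'<n. A \<rho> \<rho>' = (\<Sum>t<n. z t \<rho> * cnj (z t \<rho>'))"
  using psd_gram_factorization_from[of n A 0] by (simp add: atLeast0LessThan vanishes_before_def)

section \<open>Right inverses and the sandwich bound\<close>

lemma injective_right_inverse:
  assumes inj: "\<And>x. (\<forall>p<m. mvec m E x p = 0) \<Longrightarrow> (\<forall>p<m. x p = 0)"
  shows "\<exists>Y. right_inverse m E Y"
proof -
  define A where "A = mat m m (\<lambda>(i,j). E i j)"
  have A: "A \<in> carrier_mat m m" unfolding A_def by auto
  have "det A \<noteq> 0"
  proof
    assume "det A = 0"
    then obtain v where v: "v \<in> carrier_vec m" "v \<noteq> 0\<^sub>v m" "A *\<^sub>v v = 0\<^sub>v m"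
      using det_0_iff_vec_prod_zero[OF A] by auto
    define x where "x = (\<lambda>l. if l < m then v $ l else 0)"
    have "mvec m E x p = (A *\<^sub>v v) $ p" if p: "p < m" for p
      using p v(1) unfolding A_def x_def mvec_def
      by (auto simp: mult_mat_vec_def scalar_prod_def lessThan_atLeast0 intro!: sum.cong)
    hence "\<forall>p<m. mvec m E x p = 0" using v(3) by simp
    from inj[OF this] have "v = 0\<^sub>v m" using v(1) unfolding x_def by (auto intro!: eq_vecI)
    with v(2) show False by simp
  qed
  from det_non_zero_imp_unit[OF A this, of "()"]
  obtain B where B: "B \<in> carrier_mat m m" "A * B = 1\<^sub>m m"
    unfolding Units_def ring_mat_def by auto
  have "mmul m E (\<lambda>l r'. B $$ (l, r')) r r' = idmat r r'" if r: "r < m" "r' < m" for r r'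
  proof -
    have "mmul m E (\<lambda>l r'. B $$ (l, r')) r r' = (A * B) $$ (r, r')"
      using r B(1) unfolding A_def mmul_def
      by (auto simp: scalar_prod_def lessThan_atLeast0 intro!: sum.cong)
    also have "\<dots> = idmat r r'" using B(2) r by (simp add: idmat_def)
    finally show ?thesis .
  qed
  thus ?thesis unfolding right_inverse_def by blast
qed

lemma right_inverse_apply: assumes "right_inverse m E Y" "p < m"
  shows "mvec m E (mvec m Y v) p = v p"
proof -
  have "mvec m E (mvec m Y v) p = mvec m (mmul m E Y) v p" by (simp only: mvec_mmul)
  also have "\<dots> = (\<Sum>l<m. mmul m E Y p l * v l)" by (simp add: mvec_def)
  also have "\<dots> = (\<Sum>l<m. if l = p then v l else 0)"
    using assms by (intro sum.cong refl) (auto simp: right_inverse_def idmat_def)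
  also have "\<dots> = v p" using assms(2) by simp
  finally show ?thesis .
qed

lemma right_inverse_mmul: assumes "right_inverse m E Y" "r < m"
  shows "mmul m (mmul m E Y) B r j = B r j"
proof -
  have "mmul m (mmul m E Y) B r j = (\<Sum>l<m. if l = r then B l j else 0)"
    unfolding mmul_def[of m "mmul m E Y"]
    using assms by (intro sum.cong refl) (auto simp: right_inverse_def idmat_def)
  also have "\<dots> = B r j" using assms(2) by simp
  finally show ?thesis .
qed

text \<open>A right inverse of a psd matrix is psd: \<open>\<langle>v, Y v\<rangle> = \<langle>E w, w\<rangle>\<close> for \<open>w = Y v\<close>.\<close>
lemma psd_right_inverse: assumes E: "psd m E" and inv: "right_inverse m E Y"
  shows "psd m Y"
  unfolding psd_iff
proof
  fix v
  define w where "w = mvec m Y v"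
  have "qform m Y v = cinner m (mvec m E w) w"
    unfolding qform_def w_def by (rule cinner_cong) (auto simp: right_inverse_apply[OF inv])
  also have "\<dots> = qform m E w" unfolding qform_def by (rule hermitian_cinner[OF psd_hermitian[OF E]])
  finally show "Im (qform m Y v) = 0 \<and> 0 \<le> Re (qform m Y v)" using psd_qform[OF E] by simp
qed

lemma psd_shift_right_inverse: assumes A: "psd m A" and t: "t > 0"
  shows "\<exists>Y. right_inverse m (\<lambda>r r'. A r r' + of_real t * idmat r r') Y"
proof (rule injective_right_inverse)
  fix x assume "\<forall>p<m. mvec m (\<lambda>r r'. A r r' + of_real t * idmat r r') x p = 0"
  hence "qform m (\<lambda>r r'. A r r' + of_real t * idmat r r') x = 0"
    unfolding qform_def cinner_def by simp
  moreover have "qform m (\<lambda>r r'. A r r' + of_real t * idmat r r') x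
      = qform m A x + of_real (t * (\<Sum>p<m. (cmod (x p))^2))"
    unfolding qform_add_mat qform_scale_mat qform_idmat cinner_self by simp
  ultimately have "Re (qform m A x) + t * (\<Sum>p<m. (cmod (x p))^2) = 0"
    by (metis Re_complex_of_real plus_complex.sel(1) zero_complex.sel(1))
  moreover have "Re (qform m A x) \<ge> 0" using psd_qform[OF A] by blast
  moreover have "(\<Sum>p<m. (cmod (x p))^2) \<ge> 0" by (simp add: sum_nonneg)
  ultimately have "(\<Sum>p<m. (cmod (x p))^2) = 0" using t
    by (metis add_nonneg_eq_0_iff mult_eq_0_iff mult_nonneg_nonneg less_imp_le less_irrefl)
  hence "\<forall>p\<in>{..<m}. (cmod (x p))^2 = 0" by (subst (asm) sum_nonneg_eq_0_iff) auto
  thus "\<forall>p<m. x p = 0" by simp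
qed

lemma psd_sandwich: assumes "hermitian n A" "psd n Y" shows "psd n (mmul n (mmul n A Y) A)"
  unfolding psd_iff qform_sandwich[OF assms(1)] using psd_qform[OF assms(2)] unfolding qform_def by simp

text \<open>The four sandwiches \<open>A Y A, A Y B, B Y A, B Y B\<close> combine to the psd matrix
  \<open>(\<lambda>A + B) Y (\<lambda>A + B)\<close>; this is the positivity behind Cauchy-Schwarz below.\<close>
lemma psd_sandwich_combination: assumes HA: "hermitian n A" and HB: "hermitian n B" and Y: "psd n Y"
  shows "psd n (\<lambda>i j. cnj l * l * mmul n (mmul n A Y) A i j + cnj l * mmul n (mmul n A Y) B i j
                     + l * mmul n (mmul n B Y) A i j + mmul n (mmul n B Y) B i j)"
  unfolding psd_iff
proof
  fix x
  define u where "u = mvec n A x"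
  define v where "v = mvec n B x"
  have "qform n (\<lambda>i j. cnj l * l * mmul n (mmul n A Y) A i j + cnj l * mmul n (mmul n A Y) B i j
                     + l * mmul n (mmul n B Y) A i j + mmul n (mmul n B Y) B i j) x
      = qform n Y (\<lambda>p. l * u p + v p)"
    unfolding qform_add_mat qform_scale_mat qform_sandwich[OF HA] qform_sandwich[OF HB]
      u_def[symmetric] v_def[symmetric]
    unfolding qform_def mvec_add_vec mvec_scale_vec cinner_add_left cinner_add_right
      cinner_scale_left cinner_scale_right
    by (simp add: algebra_simps)
  thus "Im (qform n (\<lambda>i j. cnj l * l * mmul n (mmul n A Y) A i j + cnj l * mmul n (mmul n A Y) B i j
                     + l * mmul n (mmul n B Y) A i j + mmul n (mmul n B Y) B i j) x) = 0 \<and>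
        0 \<le> Re (qform n (\<lambda>i j. cnj l * l * mmul n (mmul n A Y) A i j + cnj l * mmul n (mmul n A Y) B i j
                     + l * mmul n (mmul n B Y) A i j + mmul n (mmul n B Y) B i j) x)"
    using psd_qform[OF Y] by simp
qed

text \<open>With \<open>y = Y Q x\<close> one has \<open>\<langle>x, QYQ x\<rangle> = \<langle>(Q+R) y, y\<rangle> = \<langle>x, Q y\<rangle>\<close>, and
  \<open>0 \<le> \<langle>x - y, Q (x - y)\<rangle> + \<langle>y, R y\<rangle>\<close> gives the claim.\<close>
lemma psd_minus_sandwich: assumes Q: "psd m Q" and R: "psd m R"
  and EQR: "\<And>i j. i < m \<Longrightarrow> j < m \<Longrightarrow> E i j = Q i j + R i j"
  and inv: "right_inverse m E Y"
  shows "psd m (\<lambda>i j. Q i j - mmul m (mmul m Q Y) Q i j)"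
  unfolding psd_iff
proof
  fix x
  have HQ: "hermitian m Q" using psd_hermitian[OF Q] .
  have Epsd: "psd m E" by (rule psd_cong[OF psd_add[OF Q R] EQR])
  have HE: "hermitian m E" using psd_hermitian[OF Epsd] .
  define u where "u = mvec m Q x"
  define y where "y = mvec m Y u"
  define s where "s = qform m E y"
  have Ey: "cinner m u y = s"
  proof -
    have "cinner m u y = cinner m (mvec m E y) y"
      unfolding y_def by (rule cinner_cong) (auto simp: right_inverse_apply[OF inv])
    also have "\<dots> = s" unfolding s_def qform_def by (rule hermitian_cinner[OF HE])
    finally show ?thesis .
  qed
  have s1: "qform m (mmul m (mmul m Q Y) Q) x = s"
    unfolding qform_sandwich[OF HQ] u_def[symmetric] y_def[symmetric] Ey ..
  have s2: "cinner m x (mvec m Q y) = s"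
    using Ey unfolding u_def hermitian_cinner[OF HQ] .
  have s3: "s = qform m Q y + qform m R y" unfolding s_def qform_add_mat[symmetric] by (rule qform_cong_mat[OF EQR])
  have sreal: "Im s = 0" using psd_qform[OF Epsd] s_def by simp
  have s4: "cinner m y (mvec m Q x) = cnj s"
    unfolding s2[symmetric] by (metis hermitian_cinner[OF HQ] cinner_cnj)
  have "Re (qform m Q (\<lambda>p. x p - y p)) \<ge> 0" using psd_qform[OF Q] by blast
  moreover have "qform m Q (\<lambda>p. x p - y p) = qform m Q x - s - cnj s + qform m Q y"
    unfolding qform_def mvec_diff_vec cinner_diff_left cinner_diff_right
    using s2 s4 unfolding qform_def by simp
  ultimately have "Re (qform m Q x) - 2 * Re s + Re (qform m Q y) \<ge> 0" by simp
  moreover have "Re (qform m R y) \<ge> 0" using psd_qform[OF R] by blast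
  ultimately have "Re (qform m Q x) - Re s \<ge> 0" using s3 by simp
  moreover have "Im (qform m Q x) = 0" using psd_qform[OF Q] by blast
  ultimately show "Im (qform m (\<lambda>i j. Q i j - mmul m (mmul m Q Y) Q i j) x) = 0 \<and>
      0 \<le> Re (qform m (\<lambda>i j. Q i j - mmul m (mmul m Q Y) Q i j) x)"
    unfolding qform_diff_mat s1 using sreal by simp
qed

section \<open>The pairing behind the maximal tensor product\<close>

text \<open>For a \<open>k \<times> m\<close> scalar array \<open>\<alpha>\<close> (the column \<open>A\<close> in \<open>A\<^sup>*(P \<otimes> Q)A\<close>), the entry of
  \<open>A\<^sup>*(P \<otimes> Z)A\<close> for scalar matrices \<open>P\<close> (size k) and \<open>Z\<close> (size m).\<close>
definition pairing :: "nat \<Rightarrow> nat \<Rightarrow> (nat\<Rightarrow>nat\<Rightarrow>complex) \<Rightarrow> (nat\<Rightarrow>nat\<Rightarrow>complex) \<Rightarrow> (nat\<Rightarrow>nat\<Rightarrow>complex) \<Rightarrow> complex" where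
  "pairing k m \<alpha> P Z = (\<Sum>p<k. \<Sum>r<m. \<Sum>p'<k. \<Sum>r'<m. cnj (\<alpha> p r) * \<alpha> p' r' * P p p' * Z r r')"

lemma pairing_cinner:
  "pairing k m \<alpha> P Z = (\<Sum>p<k. \<Sum>p'<k. P p p' * cinner m (\<lambda>r. \<alpha> p r) (mvec m Z (\<lambda>r. \<alpha> p' r)))"
proof -
  have "pairing k m \<alpha> P Z = (\<Sum>p<k. \<Sum>p'<k. \<Sum>r<m. \<Sum>r'<m. cnj (\<alpha> p r) * \<alpha> p' r' * P p p' * Z r r')"
    unfolding pairing_def by (rule sum.cong[OF refl], rule sum.swap)
  also have "\<dots> = (\<Sum>p<k. \<Sum>p'<k. P p p' * cinner m (\<lambda>r. \<alpha> p r) (mvec m Z (\<lambda>r. \<alpha> p' r)))"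
    unfolding cinner_def mvec_def by (simp add: sum_distrib_left mult_ac)
  finally show ?thesis .
qed

lemma cinner_gram:
  assumes Z: "\<forall>\<rho><m. \<forall>\<rho>'<m. Z \<rho> \<rho>' = (\<Sum>t<m. z t \<rho> * cnj (z t \<rho>'))"
  shows "cinner m u (mvec m Z v) = (\<Sum>t<m. cnj (cinner m (z t) u) * cinner m (z t) v)"
proof -
  have "cinner m u (mvec m Z v) = (\<Sum>r<m. \<Sum>r'<m. \<Sum>t<m. cnj (u r) * z t r * (cnj (z t r') * v r'))"
    unfolding cinner_def mvec_def using Z by (simp add: sum_distrib_left sum_distrib_right mult_ac)
  also have "\<dots> = (\<Sum>r<m. \<Sum>t<m. \<Sum>r'<m. cnj (u r) * z t r * (cnj (z t r') * v r'))"
    by (rule sum.cong[OF refl], rule sum.swap)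
  also have "\<dots> = (\<Sum>t<m. \<Sum>r<m. \<Sum>r'<m. cnj (u r) * z t r * (cnj (z t r') * v r'))"
    by (rule sum.swap)
  also have "\<dots> = (\<Sum>t<m. cnj (cinner m (z t) u) * cinner m (z t) v)"
    unfolding cinner_def by (simp add: sum_distrib_left sum_distrib_right mult_ac)
  finally show ?thesis .
qed

text \<open>Positivity of \<open>A\<^sup>*(P \<otimes> Z)A\<close>: factoring \<open>Z = \<Sum>\<^sub>t z\<^sub>t z\<^sub>t\<^sup>*\<close> writes the pairing as a sum
  of values of the quadratic form of \<open>P\<close>.\<close>
lemma pairing_nonneg: assumes P: "psd k P" and Z: "psd m Z"
  shows "Im (pairing k m \<alpha> P Z) = 0 \<and> Re (pairing k m \<alpha> P Z) \<ge> 0"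
proof -
  obtain z where z: "\<forall>\<rho><m. \<forall>\<rho>'<m. Z \<rho> \<rho>' = (\<Sum>t<m. z t \<rho> * cnj (z t \<rho>'))"
    using psd_gram_factorization[OF Z] by blast
  define y where "y = (\<lambda>t p. cinner m (z t) (\<lambda>r. \<alpha> p r))"
  have "pairing k m \<alpha> P Z = (\<Sum>p<k. \<Sum>p'<k. \<Sum>t<m. cnj (y t p) * P p p' * y t p')"
    unfolding pairing_cinner cinner_gram[OF z] y_def by (simp add: sum_distrib_left mult_ac)
  also have "\<dots> = (\<Sum>p<k. \<Sum>t<m. \<Sum>p'<k. cnj (y t p) * P p p' * y t p')"
    by (rule sum.cong[OF refl], rule sum.swap)
  also have "\<dots> = (\<Sum>t<m. \<Sum>p<k. \<Sum>p'<k. cnj (y t p) * P p p' * y t p')"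
    by (rule sum.swap)
  also have "\<dots> = (\<Sum>t<m. qform k P (y t))" unfolding qform_sum ..
  finally have eq: "pairing k m \<alpha> P Z = (\<Sum>t<m. qform k P (y t))" .
  have "Im (\<Sum>t<m. qform k P (y t)) = 0" using psd_qform[OF P] by (simp add: Im_sum)
  moreover have "Re (\<Sum>t<m. qform k P (y t)) \<ge> 0" using psd_qform[OF P] by (simp add: Re_sum sum_nonneg)
  ultimately show ?thesis unfolding eq by simp
qed

lemma pairing_cong_Z: "(\<And>r r'. r < m \<Longrightarrow> r' < m \<Longrightarrow> Z r r' = Z' r r') \<Longrightarrow> pairing k m \<alpha> P Z = pairing k m \<alpha> P Z'"
  unfolding pairing_def by (intro sum.cong refl) auto
lemma pairing_cong_P: "(\<And>p p'. p < k \<Longrightarrow> p' < k \<Longrightarrow> P p p' = P' p p') \<Longrightarrow> pairing k m \<alpha> P Z = pairing k m \<alpha> P' Z"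
  unfolding pairing_def by (intro sum.cong refl) auto
lemma pairing_add_Z: "pairing k m \<alpha> P (\<lambda>r r'. Z1 r r' + Z2 r r') = pairing k m \<alpha> P Z1 + pairing k m \<alpha> P Z2"
  unfolding pairing_def by (simp add: distrib_left sum.distrib)
lemma pairing_diff_Z: "pairing k m \<alpha> P (\<lambda>r r'. Z1 r r' - Z2 r r') = pairing k m \<alpha> P Z1 - pairing k m \<alpha> P Z2"
  unfolding pairing_def by (simp add: right_diff_distrib sum_subtractf)
lemma pairing_scale_Z: "pairing k m \<alpha> P (\<lambda>r r'. c * Z r r') = c * pairing k m \<alpha> P Z"
  unfolding pairing_def by (simp add: sum_distrib_left mult_ac)
lemma pairing_add_P: "pairing k m \<alpha> (\<lambda>p p'. P1 p p' + P2 p p') Z = pairing k m \<alpha> P1 Z + pairing k m \<alpha> P2 Z"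
  unfolding pairing_def by (simp add: distrib_left distrib_right sum.distrib)

text \<open>If \<open>|\<lambda>|\<^sup>2 a + cnj \<lambda> u + \<lambda> v + c\<close> is real and nonnegative for all \<open>\<lambda>\<close>, its coefficients
  are hermitian: \<open>a\<close>, \<open>c\<close> are real and \<open>v = cnj u\<close> (test \<open>\<lambda> = 0, 1, -1, i\<close>).\<close>
lemma quadratic_nonneg_hermitian: fixes a u v c :: complex
  assumes H: "\<And>l. Im (cnj l * l * a + cnj l * u + l * v + c) = 0 \<and> Re (cnj l * l * a + cnj l * u + l * v + c) \<ge> 0"
  shows "Im a = 0 \<and> Im c = 0 \<and> Re c \<ge> 0 \<and> v = cnj u"
proof -
  have h0: "Im c = 0" "Re c \<ge> 0" using H[of 0] by auto
  have h1: "Im (a + u + v + c) = 0" using H[of 1] by simp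
  have h2: "Im (a - u - v + c) = 0" using H[of "-1"] by simp
  have h3: "Im (a - \<i> * u + \<i> * v + c) = 0" using H[of "\<i>"] by simp
  have ia: "Im a = 0" using h0 h1 h2 by simp
  thus ?thesis using h0 h1 h2 h3 by (simp add: complex_eq_iff)
qed

text \<open>Cauchy-Schwarz for such a quadratic polynomial: \<open>|u|\<^sup>2 \<le> a c\<close> (minimize over \<open>\<lambda>\<close>).\<close>
lemma quadratic_cauchy_schwarz: fixes a u v c :: complex
  assumes H: "\<And>l. Im (cnj l * l * a + cnj l * u + l * v + c) = 0 \<and> Re (cnj l * l * a + cnj l * u + l * v + c) \<ge> 0"
  and ra: "Re a \<ge> 0"
  shows "(cmod u)^2 \<le> Re a * Re c"
proof -
  obtain ia: "Im a = 0" and h0: "Im c = 0" "Re c \<ge> 0" and v: "v = cnj u"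
    using quadratic_nonneg_hermitian[OF H] by blast
  define A where "A = Re a"
  define C where "C = Re c"
  define N where "N = (cmod u)^2"
  have a: "a = of_real A" unfolding A_def using ia by (simp add: complex_eq_iff)
  have c: "c = of_real C" unfolding C_def using h0 by (simp add: complex_eq_iff)
  have uu: "cnj u * u = of_real N" "u * cnj u = of_real N"
    unfolding N_def complex_norm_square by (simp_all add: mult.commute)
  show ?thesis
  proof (cases "A > 0")
    case True
    define l where "l = - u / of_real A"
    define x where "x = (of_real A :: complex)"
    have x0: "x \<noteq> 0" using True unfolding x_def by simp
    have cl: "cnj l = - cnj u / x" unfolding l_def x_def by simp
    have e1: "cnj l * l * a = cnj u * u / x" unfolding cl a x_def[symmetric] unfolding l_def x_def[symmetric]
      using x0 by (simp add: field_simps)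
    have e2: "cnj l * u = - (cnj u * u) / x" unfolding cl by simp
    have e3: "l * v = - (u * cnj u) / x" unfolding l_def x_def[symmetric] v by simp
    have "cnj l * l * a + cnj l * u + l * v + c = of_real N / x - of_real N / x - of_real N / x + of_real C"
      unfolding e1 e2 e3 uu c by simp
    also have "\<dots> = of_real (C - N / A)" unfolding x_def by simp
    finally have "cnj l * l * a + cnj l * u + l * v + c = of_real (C - N / A)" .
    hence "C - N / A \<ge> 0" using H[of l] by simp
    hence "N \<le> A * C" using True by (simp add: field_simps)
    thus ?thesis unfolding N_def A_def C_def .
  next
    case False
    hence A0: "A = 0" using ra A_def by simp
    have "N = 0"
    proof (rule ccontr)
      assume "N \<noteq> 0"
      hence Np: "N > 0" unfolding N_def by simp
      define t where "t = (C + 1) / (2 * N)"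
      define l where "l = - of_real t * u"
      have "cnj l * l * a + cnj l * u + l * v + c = of_real (C - 2 * t * N)"
        unfolding l_def a c v A0 using uu by (simp add: algebra_simps)
      hence "C - 2 * t * N \<ge> 0" using H[of l] by simp
      moreover have "2 * t * N = C + 1" unfolding t_def using Np by simp
      ultimately show False by simp
    qed
    thus ?thesis unfolding N_def A_def[symmetric] C_def[symmetric] using A0 by simp
  qed
qed


lemma pairing_sandwich_cauchy_schwarz:
  assumes P: "psd k P" and Qa: "psd m Qa" and Qb: "psd m Qb" and Y: "psd m Y"
    and Ca: "psd m (\<lambda>i j. Qa i j - mmul m (mmul m Qa Y) Qa i j)"
    and Cb: "psd m (\<lambda>i j. Qb i j - mmul m (mmul m Qb Y) Qb i j)"
  shows "cmod (pairing k m \<alpha> P (mmul m (mmul m Qa Y) Qb)) \<le> sqrt (Re (pairing k m \<alpha> P Qa)) * sqrt (Re (pairing k m \<alpha> P Qb))"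
proof -
  have HA: "hermitian m Qa" using psd_hermitian[OF Qa] .
  have HB: "hermitian m Qb" using psd_hermitian[OF Qb] .
  define taa where "taa = pairing k m \<alpha> P (mmul m (mmul m Qa Y) Qa)"
  define tab where "tab = pairing k m \<alpha> P (mmul m (mmul m Qa Y) Qb)"
  define tba where "tba = pairing k m \<alpha> P (mmul m (mmul m Qb Y) Qa)"
  define tbb where "tbb = pairing k m \<alpha> P (mmul m (mmul m Qb Y) Qb)"
  have quad: "Im (cnj l * l * taa + cnj l * tab + l * tba + tbb) = 0 \<and> Re (cnj l * l * taa + cnj l * tab + l * tba + tbb) \<ge> 0" for l
  proof -
    have "pairing k m \<alpha> P (\<lambda>i j. cnj l * l * mmul m (mmul m Qa Y) Qa i j + cnj l * mmul m (mmul m Qa Y) Qb i j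
                     + l * mmul m (mmul m Qb Y) Qa i j + mmul m (mmul m Qb Y) Qb i j)
          = cnj l * l * taa + cnj l * tab + l * tba + tbb"
      unfolding taa_def tab_def tba_def tbb_def by (simp only: pairing_add_Z pairing_scale_Z)
    thus ?thesis using pairing_nonneg[OF P psd_sandwich_combination[OF HA HB Y, of l], of \<alpha>] by simp
  qed
  have taa0: "Re taa \<ge> 0" using pairing_nonneg[OF P psd_sandwich[OF HA Y]] taa_def by simp
  have tbb0: "Re tbb \<ge> 0" using pairing_nonneg[OF P psd_sandwich[OF HB Y]] tbb_def by simp
  have cs: "(cmod tab)^2 \<le> Re taa * Re tbb" by (rule quadratic_cauchy_schwarz[OF quad taa0])
  have la: "Re taa \<le> Re (pairing k m \<alpha> P Qa)"
    using pairing_nonneg[OF P Ca, of \<alpha>] unfolding pairing_diff_Z taa_def by simp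
  have lb: "Re tbb \<le> Re (pairing k m \<alpha> P Qb)"
    using pairing_nonneg[OF P Cb, of \<alpha>] unfolding pairing_diff_Z tbb_def by simp
  have "(cmod tab)^2 \<le> Re (pairing k m \<alpha> P Qa) * Re (pairing k m \<alpha> P Qb)"
    using cs la lb taa0 tbb0 by (meson mult_mono order_trans)
  hence "sqrt ((cmod tab)^2) \<le> sqrt (Re (pairing k m \<alpha> P Qa) * Re (pairing k m \<alpha> P Qb))"
    using real_sqrt_le_mono by blast
  thus ?thesis unfolding tab_def by (simp add: real_sqrt_mult)
qed



section \<open>V-families and the block inequality\<close>

text \<open>These are
  the positive elements of \<open>M\<^sub>n(\<V>)\<close>, read coordinatewise.\<close>
definition V_family :: "nat \<Rightarrow> (nat \<Rightarrow> nat \<Rightarrow> nat \<Rightarrow> complex) \<Rightarrow> bool" where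
  "V_family n A \<longleftrightarrow> (\<forall>i\<in>{1..4}. psd n (A i)) \<and>
     (\<forall>p<n. \<forall>p'<n. A 1 p p' + A 2 p p' = A 3 p p' + A 4 p p')"

lemma MkV_pos_iff_V_family: "MkV_pos n P \<longleftrightarrow> V_family n (\<lambda>i p p'. P p p' i)"
  unfolding MkV_pos_def V_family_def inV_def by auto

lemma V_family_psd: "V_family n A \<Longrightarrow> i \<in> {1..4} \<Longrightarrow> psd n (A i)"
  unfolding V_family_def by blast

lemma V_family_halves:
  assumes "V_family n A" "x \<in> {0,2}" "p < n" "p' < n"
  shows "A (x+1) p p' + A (x+2) p p' = A 1 p p' + A 2 p p'"
proof -
  have "x = 0 \<or> x = 2" using assms(2) by simp
  thus ?thesis
  proof
    assume "x = 2"
    thus ?thesis using assms(1,3,4) unfolding V_family_def by simp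
  qed (simp add: numeral_2_eq_2)
qed

lemma V_family_sandwich_bound:
  assumes A: "V_family m A" and inv: "right_inverse m (\<lambda>r r'. A 1 r r' + A 2 r r') Y"
    and x: "x \<in> {1..4}"
  shows "psd m (\<lambda>i j. A x i j - mmul m (mmul m (A x) Y) (A x) i j)"
proof -
  have "\<exists>x'\<in>{1..4}. \<forall>r<m. \<forall>r'<m. A 1 r r' + A 2 r r' = A x r r' + A x' r r'"
  proof -
    have "x = 1 \<or> x = 2 \<or> x = 3 \<or> x = 4" using x by auto
    thus ?thesis
    proof (elim disjE)
      assume "x = 1" thus ?thesis by (intro bexI[of _ 2]) auto
    next
      assume "x = 2" thus ?thesis by (intro bexI[of _ 1]) (auto simp: add.commute)
    next
      assume "x = 3" thus ?thesis using A unfolding V_family_def by (intro bexI[of _ 4]) auto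
    next
      assume "x = 4" thus ?thesis using A unfolding V_family_def by (intro bexI[of _ 3]) (auto simp: add.commute)
    qed
  qed
  then obtain x' where x': "x' \<in> {1..4}" "\<And>r r'. r < m \<Longrightarrow> r' < m \<Longrightarrow> A 1 r r' + A 2 r r' = A x r r' + A x' r r'"
    by blast
  show ?thesis
    by (rule psd_minus_sandwich[OF V_family_psd[OF A x] V_family_psd[OF A x'(1)] _ inv]) (rule x'(2))
qed

lemma sandwich_decomposition:
  assumes inv: "right_inverse m E Y" and r: "r < m" "r' < m"
    and A: "\<And>l l'. l < m \<Longrightarrow> l' < m \<Longrightarrow> E l l' = A1 l l' + A2 l l'"
    and B: "\<And>l l'. l < m \<Longrightarrow> l' < m \<Longrightarrow> E l l' = B1 l l' + B2 l l'"
  shows "E r r' = mmul m (mmul m A1 Y) B1 r r' + mmul m (mmul m A1 Y) B2 r r'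
                + mmul m (mmul m A2 Y) B1 r r' + mmul m (mmul m A2 Y) B2 r r'"
proof -
  have row: "mmul m E Y r l = mmul m A1 Y r l + mmul m A2 Y r l" for l
    by (rule mmul_add_left) (use A r(1) in auto)
  have "E r r' = mmul m (mmul m E Y) E r r'" using right_inverse_mmul[OF inv r(1)] by simp
  also have "\<dots> = mmul m (mmul m A1 Y) E r r' + mmul m (mmul m A2 Y) E r r'"
    by (rule mmul_add_left) (rule row)
  also have "\<dots> = mmul m (mmul m A1 Y) B1 r r' + mmul m (mmul m A1 Y) B2 r r'
                + (mmul m (mmul m A2 Y) B1 r r' + mmul m (mmul m A2 Y) B2 r r')"
    by (intro arg_cong2[where f="(+)"] mmul_add_right) (use B r(2) in auto)
  finally show ?thesis by (simp add: add.assoc)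
qed

lemma pairing_V_halves_left:
  assumes "V_family k P" "b \<in> {0,2}"
  shows "pairing k m \<alpha> (P (b+1)) Z + pairing k m \<alpha> (P (b+2)) Z
       = pairing k m \<alpha> (\<lambda>p p'. P 1 p p' + P 2 p p') Z"
  unfolding pairing_add_P[symmetric] by (rule pairing_cong_P) (rule V_family_halves[OF assms])

lemma pairing_V_halves_right:
  assumes "V_family m Q" "d \<in> {0,2}"
  shows "pairing k m \<alpha> P (Q (d+1)) + pairing k m \<alpha> P (Q (d+2))
       = pairing k m \<alpha> P (\<lambda>r r'. Q 1 r r' + Q 2 r r')"
  unfolding pairing_add_Z[symmetric] by (rule pairing_cong_Z) (rule V_family_halves[OF assms])

text \<open>The real coefficient array of \<open>\<alpha>\<^sup>*(P \<otimes> Q)\<alpha>\<close> for two V-families: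
  the coefficient of \<open>e\<^sub>i \<otimes> e\<^sub>j\<close>.\<close>
definition coeff_array :: "nat \<Rightarrow> nat \<Rightarrow> (nat\<Rightarrow>nat\<Rightarrow>complex) \<Rightarrow> (nat\<Rightarrow>nat\<Rightarrow>nat\<Rightarrow>complex)
    \<Rightarrow> (nat\<Rightarrow>nat\<Rightarrow>nat\<Rightarrow>complex) \<Rightarrow> nat \<Rightarrow> nat \<Rightarrow> real" where
  "coeff_array k m \<alpha> P Q i j = Re (pairing k m \<alpha> (P i) (Q j))"

lemma S_lower_bound:
  assumes "\<And>b. b \<in> {0,2::nat} \<Longrightarrow> x \<le> (\<Sum>i\<in>{1,2}. sqrt (q (b+i) (a+j)) * sqrt (q (b+i) (c+k)))"
  shows "x \<le> S q a c j k"
proof -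
  define f where "f b = (\<Sum>i\<in>{1,2::nat}. sqrt (q (b+i) (a+j)) * sqrt (q (b+i) (c+k)))" for b
  have eq: "{(\<Sum>i\<in>{1,2}. sqrt (q (b+i) (a+j)) * sqrt (q (b+i) (c+k))) | b. b \<in> {0,2::nat}} = f ` {0,2}"
    unfolding f_def by (rule Setcompr_eq_image)
  show ?thesis unfolding S_def eq
  proof (rule Min.boundedI)
    fix y assume "y \<in> f ` {0,2}"
    then obtain b where b: "b \<in> {0,2}" "y = f b" by blast
    show "x \<le> y" unfolding b(2) f_def by (rule assms[OF b(1)])
  qed auto
qed

text \<open>One block of \<open>E Y E\<close>: pairing \<open>P\<^sub>1 + P\<^sub>2 = P\<^sub>(\<^sub>b\<^sub>+\<^sub>1\<^sub>) + P\<^sub>(\<^sub>b\<^sub>+\<^sub>2\<^sub>)\<close> with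
  \<open>Q\<^sub>(\<^sub>a\<^sub>+\<^sub>j\<^sub>) Y Q\<^sub>(\<^sub>c\<^sub>+\<^sub>l\<^sub>)\<close> and applying Cauchy-Schwarz to both summands, for every \<open>b\<close>.\<close>
lemma block_term_bound:
  assumes P: "V_family k P" and Q: "V_family m Q"
    and inv: "right_inverse m (\<lambda>r r'. Q 1 r r' + Q 2 r r') Y"
    and a: "a \<in> {0,2}" and c: "c \<in> {0,2}" and j: "j \<in> {1,2}" and l: "l \<in> {1,2}"
  shows "cmod (pairing k m \<alpha> (\<lambda>p p'. P 1 p p' + P 2 p p') (mmul m (mmul m (Q (a+j)) Y) (Q (c+l))))
       \<le> S (coeff_array k m \<alpha> P Q) a c j l"
proof (rule S_lower_bound)
  fix b :: nat assume b: "b \<in> {0,2}"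
  define Z where "Z = mmul m (mmul m (Q (a+j)) Y) (Q (c+l))"
  have aj: "a + j \<in> {1..4}" and cl: "c + l \<in> {1..4}" using a c j l by auto
  have Ypsd: "psd m Y"
    by (rule psd_right_inverse[OF psd_add[OF V_family_psd[OF Q] V_family_psd[OF Q]] inv]) auto
  have one: "cmod (pairing k m \<alpha> (P (b+i)) Z)
      \<le> sqrt (coeff_array k m \<alpha> P Q (b+i) (a+j)) * sqrt (coeff_array k m \<alpha> P Q (b+i) (c+l))"
    if i: "i \<in> {1,2}" for i
  proof -
    have "psd k (P (b+i))" using V_family_psd[OF P] b i by auto
    thus ?thesis unfolding Z_def coeff_array_def
      by (rule pairing_sandwich_cauchy_schwarz[OF _ V_family_psd[OF Q aj] V_family_psd[OF Q cl] Ypsd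
            V_family_sandwich_bound[OF Q inv aj] V_family_sandwich_bound[OF Q inv cl]])
  qed
  have "cmod (pairing k m \<alpha> (\<lambda>p p'. P 1 p p' + P 2 p p') Z)
      = cmod (pairing k m \<alpha> (P (b+1)) Z + pairing k m \<alpha> (P (b+2)) Z)"
    using pairing_V_halves_left[OF P b] by simp
  also have "\<dots> \<le> cmod (pairing k m \<alpha> (P (b+1)) Z) + cmod (pairing k m \<alpha> (P (b+2)) Z)"
    by (rule norm_triangle_ineq)
  also have "\<dots> \<le> (\<Sum>i\<in>{1,2}. sqrt (coeff_array k m \<alpha> P Q (b+i) (a+j)) * sqrt (coeff_array k m \<alpha> P Q (b+i) (c+l)))"
    using one[of 1] one[of 2] by simp
  finally show "cmod (pairing k m \<alpha> (\<lambda>p p'. P 1 p p' + P 2 p p') (mmul m (mmul m (Q (a+j)) Y) (Q (c+l))))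
      \<le> (\<Sum>i\<in>{1,2}. sqrt (coeff_array k m \<alpha> P Q (b+i) (a+j)) * sqrt (coeff_array k m \<alpha> P Q (b+i) (c+l)))"
    unfolding Z_def .
qed

text \<open>The inequality of the theorem for the coefficient array of two V-families, when
  \<open>E = Q\<^sub>1 + Q\<^sub>2\<close> is invertible: the diagonal block sum is \<open>Re\<close> of the pairing of
  \<open>P\<^sub>1 + P\<^sub>2\<close> with \<open>E = E Y E\<close>, which splits into the four blocks bounded above.\<close>
lemma block_inequality:
  assumes P: "V_family k P" and Q: "V_family m Q"
    and inv: "right_inverse m (\<lambda>r r'. Q 1 r r' + Q 2 r r') Y"
    and d: "d \<in> {0,2}" and a: "a \<in> {0,2}" and c: "c \<in> {0,2}"
  shows "(\<Sum>i\<in>{1,2}. \<Sum>j\<in>{1,2}. coeff_array k m \<alpha> P Q (d+i) (d+j))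
       \<le> (\<Sum>j\<in>{1,2}. \<Sum>l\<in>{1,2}. S (coeff_array k m \<alpha> P Q) a c j l)"
proof -
  define Pe where "Pe = (\<lambda>p p'. P 1 p p' + P 2 p p')"
  define E where "E = (\<lambda>r r'. Q 1 r r' + Q 2 r r')"
  define T where "T j l = pairing k m \<alpha> Pe (mmul m (mmul m (Q (a+j)) Y) (Q (c+l)))" for j l
  have row: "coeff_array k m \<alpha> P Q i (d+1) + coeff_array k m \<alpha> P Q i (d+2) = Re (pairing k m \<alpha> (P i) E)" for i
    unfolding coeff_array_def E_def pairing_V_halves_right[OF Q d, symmetric] by simp
  have "(\<Sum>i\<in>{1,2}. \<Sum>j\<in>{1,2}. coeff_array k m \<alpha> P Q (d+i) (d+j))
      = Re (pairing k m \<alpha> (P (d+1)) E) + Re (pairing k m \<alpha> (P (d+2)) E)"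
    using row[of "d+1"] row[of "d+2"] by simp
  also have "\<dots> = Re (pairing k m \<alpha> Pe E)"
    unfolding Pe_def pairing_V_halves_left[OF P d, symmetric] by simp
  also have "pairing k m \<alpha> Pe E = (\<Sum>j\<in>{1,2}. \<Sum>l\<in>{1,2}. T j l)"
  proof -
    have "E r r' = mmul m (mmul m (Q (a+1)) Y) (Q (c+1)) r r' + mmul m (mmul m (Q (a+1)) Y) (Q (c+2)) r r'
                 + mmul m (mmul m (Q (a+2)) Y) (Q (c+1)) r r' + mmul m (mmul m (Q (a+2)) Y) (Q (c+2)) r r'"
      if "r < m" "r' < m" for r r'
      by (rule sandwich_decomposition[OF inv[folded E_def] that])
        (simp_all only: E_def V_family_halves[OF Q a] V_family_halves[OF Q c])
    hence "pairing k m \<alpha> Pe E = T 1 1 + T 1 2 + T 2 1 + T 2 2"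
      unfolding T_def pairing_add_Z[symmetric] by (intro pairing_cong_Z)
    thus ?thesis by (simp add: add.assoc)
  qed
  also have "Re (\<Sum>j\<in>{1,2}. \<Sum>l\<in>{1,2}. T j l) \<le> cmod (\<Sum>j\<in>{1,2}. \<Sum>l\<in>{1,2}. T j l)"
    by (rule complex_Re_le_cmod)
  also have "\<dots> \<le> (\<Sum>j\<in>{1,2}. \<Sum>l\<in>{1,2}. cmod (T j l))"
    by (rule order_trans[OF norm_sum sum_mono[OF norm_sum]])
  also have "\<dots> \<le> (\<Sum>j\<in>{1,2}. \<Sum>l\<in>{1,2}. S (coeff_array k m \<alpha> P Q) a c j l)"
    unfolding T_def Pe_def by (intro sum_mono block_term_bound[OF P Q inv a c]) auto
  finally show ?thesis .
qed

section \<open>Passing to the limit\<close>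

lemma sqrt_product_perturbation: fixes x x' y y' h B :: real
  assumes "0 \<le> x" "x \<le> x'" "x' \<le> x + h" "0 \<le> y" "y \<le> y'" "y' \<le> y + h"
    "0 < h" "h \<le> 1" "sqrt x \<le> B" "sqrt y \<le> B"
  shows "sqrt x' * sqrt y' \<le> sqrt x * sqrt y + sqrt h * (2 * B + 1)"
proof -
  have sx: "sqrt x' \<le> sqrt x + sqrt h"
  proof -
    have "sqrt x' \<le> sqrt (x + h)" using assms by simp
    also have "\<dots> \<le> sqrt x + sqrt h" using assms by (simp add: sqrt_add_le_add_sqrt)
    finally show ?thesis .
  qed
  have sy: "sqrt y' \<le> sqrt y + sqrt h"
  proof -
    have "sqrt y' \<le> sqrt (y + h)" using assms by simp
    also have "\<dots> \<le> sqrt y + sqrt h" using assms by (simp add: sqrt_add_le_add_sqrt)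
    finally show ?thesis .
  qed
  have p0: "0 \<le> sqrt x'" "0 \<le> sqrt y'" and sh: "0 \<le> sqrt h" "sqrt h \<le> 1" using assms by auto
  have "sqrt x' * sqrt y' \<le> (sqrt x + sqrt h) * (sqrt y + sqrt h)"
    using sx sy p0 by (meson mult_mono order_trans real_sqrt_ge_zero assms add_nonneg_nonneg less_imp_le)
  also have "\<dots> = sqrt x * sqrt y + sqrt h * (sqrt x + sqrt y + sqrt h)"
    by (simp add: algebra_simps)
  also have "\<dots> \<le> sqrt x * sqrt y + sqrt h * (2 * B + 1)"
    using assms(9,10) sh by (intro add_left_mono mult_left_mono) linarith+
  finally show ?thesis .
qed

lemma S_perturbation:
  fixes q q' :: "nat \<Rightarrow> nat \<Rightarrow> real"
  assumes q0: "\<And>i j. i \<in> {1..4} \<Longrightarrow> j \<in> {1..4} \<Longrightarrow> q i j \<ge> 0"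
    and qq: "\<And>i j. i \<in> {1..4} \<Longrightarrow> j \<in> {1..4} \<Longrightarrow> q i j \<le> q' i j \<and> q' i j \<le> q i j + h"
    and B: "\<And>i j. i \<in> {1..4} \<Longrightarrow> j \<in> {1..4} \<Longrightarrow> sqrt (q i j) \<le> B"
    and h: "0 < h" "h \<le> 1"
    and a: "a \<in> {0,2}" and c: "c \<in> {0,2}" and j: "j \<in> {1,2}" and k: "k \<in> {1,2}"
  shows "S q' a c j k \<le> S q a c j k + 2 * (sqrt h * (2 * B + 1))"
proof -
  define f where "f = (\<lambda>q b. (\<Sum>i\<in>{1,2::nat}. sqrt (q (b+i) (a+j)) * sqrt (q (b+i) (c+k))))"
  have Seq: "S q a c j k = Min (f q ` {0,2})" for q
    unfolding S_def f_def by (simp only: Setcompr_eq_image)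
  obtain b0 where b0: "b0 \<in> {0,2}" "S q a c j k = f q b0"
    unfolding Seq using Min_in[of "f q ` {0,2}"] by auto
  have "S q' a c j k \<le> f q' b0" unfolding Seq using b0 by (intro Min_le) auto
  also have "f q' b0 \<le> f q b0 + 2 * (sqrt h * (2 * B + 1))"
  proof -
    have t: "sqrt (q' (b0+i) (a+j)) * sqrt (q' (b0+i) (c+k)) \<le> sqrt (q (b0+i) (a+j)) * sqrt (q (b0+i) (c+k)) + sqrt h * (2 * B + 1)"
      if i: "i \<in> {1,2}" for i
    proof -
      have m: "b0 + i \<in> {1..4}" "a + j \<in> {1..4}" "c + k \<in> {1..4}" using b0(1) i a c j k by auto
      show ?thesis
        by (rule sqrt_product_perturbation) (use q0[OF m(1,2)] q0[OF m(1,3)] qq[OF m(1,2)] qq[OF m(1,3)] B[OF m(1,2)] B[OF m(1,3)] h in auto)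
    qed
    show ?thesis unfolding f_def using t[of 1] t[of 2] by simp
  qed
  finally show ?thesis using b0(2) by simp
qed

lemma le_by_sqrt_slack:
  fixes L R K :: real
  assumes K: "0 \<le> K" and slack: "\<And>h. 0 < h \<Longrightarrow> h \<le> 1 \<Longrightarrow> L \<le> R + K * sqrt h"
  shows "L \<le> R"
proof (rule field_le_epsilon)
  fix e :: real assume e: "0 < e"
  define h where "h = min 1 ((e / (K + 1))^2)"
  have h: "0 < h" "h \<le> 1" using e K by (auto simp: h_def)
  have "sqrt h \<le> sqrt ((e / (K + 1))^2)" unfolding h_def by (rule real_sqrt_le_mono) simp
  also have "\<dots> = e / (K + 1)" using e K by simp
  finally have "K * sqrt h \<le> K * (e / (K + 1))" using K by (rule mult_left_mono)
  also have "\<dots> \<le> e" using K e by (simp add: field_simps)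
  finally show "L \<le> R + e" using slack[OF h] by linarith
qed

lemma inequality_by_approximation:
  fixes q :: "nat \<Rightarrow> nat \<Rightarrow> real"
  assumes q0: "\<And>i j. i \<in> {1..4} \<Longrightarrow> j \<in> {1..4} \<Longrightarrow> q i j \<ge> 0"
    and H: "\<And>h. h > 0 \<Longrightarrow> \<exists>q'. (\<forall>i\<in>{1..4}. \<forall>j\<in>{1..4}. q i j \<le> q' i j \<and> q' i j \<le> q i j + h) \<and>
        (\<Sum>i\<in>{1,2}. \<Sum>j\<in>{1,2}. q' (d+i) (d+j)) \<le> (\<Sum>j\<in>{1,2}. \<Sum>k\<in>{1,2}. S q' a c j k)"
    and d: "d \<in> {0,2}" and a: "a \<in> {0,2}" and c: "c \<in> {0,2}"
  shows "(\<Sum>i\<in>{1,2}. \<Sum>j\<in>{1,2}. q (d+i) (d+j)) \<le> (\<Sum>j\<in>{1,2}. \<Sum>k\<in>{1,2}. S q a c j k)"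
proof -
  define B where "B = (\<Sum>i\<in>{1..4::nat}. \<Sum>j\<in>{1..4::nat}. sqrt (q i j))"
  have Bb: "sqrt (q i j) \<le> B" if "i \<in> {1..4}" "j \<in> {1..4}" for i j
  proof -
    have "sqrt (q i j) \<le> (\<Sum>j\<in>{1..4::nat}. sqrt (q i j))"
      by (rule member_le_sum) (use that q0 in auto)
    also have "\<dots> \<le> B" unfolding B_def
      by (rule member_le_sum[where f="\<lambda>i. \<Sum>j\<in>{1..4::nat}. sqrt (q i j)"]) (use that q0 in \<open>auto intro: sum_nonneg\<close>)
    finally show ?thesis .
  qed
  have B0: "B \<ge> 0" unfolding B_def by (intro sum_nonneg) (simp add: q0)
  show ?thesis
  proof (rule le_by_sqrt_slack)
    show "0 \<le> 8 * (2 * B + 1)" using B0 by simp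
  next
    fix h :: real assume h: "0 < h" "h \<le> 1"
    obtain q' where q': "\<forall>i\<in>{1..4}. \<forall>j\<in>{1..4}. q i j \<le> q' i j \<and> q' i j \<le> q i j + h"
      "(\<Sum>i\<in>{1,2}. \<Sum>j\<in>{1,2}. q' (d+i) (d+j)) \<le> (\<Sum>j\<in>{1,2}. \<Sum>k\<in>{1,2}. S q' a c j k)"
      using H[OF h(1)] by blast
    have "(\<Sum>i\<in>{1,2}. \<Sum>j\<in>{1,2}. q (d+i) (d+j)) \<le> (\<Sum>i\<in>{1,2}. \<Sum>j\<in>{1,2}. q' (d+i) (d+j))"
      using q'(1) d by (intro sum_mono) auto
    also have "\<dots> \<le> (\<Sum>j\<in>{1,2}. \<Sum>k\<in>{1,2}. S q' a c j k)" by (rule q'(2))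
    also have "\<dots> \<le> (\<Sum>j\<in>{1,2::nat}. \<Sum>k\<in>{1,2::nat}. S q a c j k + 2 * (sqrt h * (2 * B + 1)))"
      by (intro sum_mono S_perturbation[OF q0 _ Bb h a c]) (use q'(1) in auto)
    also have "\<dots> = (\<Sum>j\<in>{1,2}. \<Sum>k\<in>{1,2}. S q a c j k) + 8 * (2 * B + 1) * sqrt h"
      by (simp add: sum.distrib algebra_simps)
    finally show "(\<Sum>i\<in>{1,2}. \<Sum>j\<in>{1,2}. q (d+i) (d+j))
        \<le> (\<Sum>j\<in>{1,2}. \<Sum>k\<in>{1,2}. S q a c j k) + 8 * (2 * B + 1) * sqrt h" .
  qed
qed

section \<open>Positive elements of the maximal tensor product of V with itself\<close>

lemma max_pos_representation:
  assumes pos: "max_pos (\<lambda>i j. complex_of_real (q i j))" and e: "\<epsilon> > 0"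
  obtains k m \<alpha> P Q where "V_family k P" "V_family m Q"
    "\<And>i j. i \<in> {1..4} \<Longrightarrow> j \<in> {1..4} \<Longrightarrow> q i j + \<epsilon> = coeff_array k m \<alpha> P Q i j"
proof -
  have "(\<lambda>i j. complex_of_real (q i j) + complex_of_real \<epsilon>) \<in> max_D"
    using pos e unfolding max_pos_def by blast
  hence "\<exists>k m P Q \<alpha>. MkV_pos k P \<and> MkV_pos m Q \<and>
     (\<forall>i\<in>{1..4}. \<forall>j\<in>{1..4}. complex_of_real (q i j) + complex_of_real \<epsilon> =
        pairing k m \<alpha> (\<lambda>p p'. P p p' i) (\<lambda>r r'. Q r r' j))"
    unfolding max_D_def pairing_def by simp
  then obtain k m P Q \<alpha> where P: "MkV_pos k P" and Q: "MkV_pos m Q" and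
    w: "\<forall>i\<in>{1..4}. \<forall>j\<in>{1..4}. complex_of_real (q i j) + complex_of_real \<epsilon> =
        pairing k m \<alpha> (\<lambda>p p'. P p p' i) (\<lambda>r r'. Q r r' j)"
    by blast
  show ?thesis
  proof (rule that[OF P[unfolded MkV_pos_iff_V_family] Q[unfolded MkV_pos_iff_V_family]])
    fix i j :: nat assume "i \<in> {1..4}" "j \<in> {1..4}"
    hence "complex_of_real (q i j + \<epsilon>) = pairing k m \<alpha> (\<lambda>p p'. P p p' i) (\<lambda>r r'. Q r r' j)"
      using w by simp
    thus "q i j + \<epsilon> = coeff_array k m \<alpha> (\<lambda>i p p'. P p p' i) (\<lambda>j r r'. Q r r' j) i j"
      unfolding coeff_array_def by (metis Re_complex_of_real)
  qed
qed

lemma pairing_V_family_nonneg: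
  "V_family k P \<Longrightarrow> psd m Z \<Longrightarrow> i \<in> {1..4} \<Longrightarrow> 0 \<le> Re (pairing k m \<alpha> (P i) Z)"
  using pairing_nonneg V_family_psd by blast

lemma max_pos_nonneg:
  assumes pos: "max_pos (\<lambda>i j. complex_of_real (q i j))" and ij: "i \<in> {1..4}" "j \<in> {1..4}"
  shows "0 \<le> q i j"
proof (rule ccontr)
  assume "\<not> 0 \<le> q i j"
  hence "- q i j / 2 > 0" by simp
  then obtain k m \<alpha> P Q where P: "V_family k P" and Q: "V_family m Q"
    and rep: "q i j + - q i j / 2 = coeff_array k m \<alpha> P Q i j"
    using max_pos_representation[OF pos] ij by metis
  have "0 \<le> coeff_array k m \<alpha> P Q i j"
    unfolding coeff_array_def by (rule pairing_V_family_nonneg[OF P V_family_psd[OF Q ij(2)] ij(1)])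
  with rep \<open>\<not> 0 \<le> q i j\<close> show False by simp
qed

lemma V_family_regularize:
  assumes Q: "V_family m Q" and t: "t > 0"
  shows "V_family m (\<lambda>j r r'. Q j r r' + of_real t * idmat r r')"
    and "\<exists>Y. right_inverse m (\<lambda>r r'. (Q 1 r r' + of_real t * idmat r r') + (Q 2 r r' + of_real t * idmat r r')) Y"
proof -
  have tI: "psd m (\<lambda>r r'. of_real t * idmat r r')" using psd_scaled_idmat t by simp
  show "V_family m (\<lambda>j r r'. Q j r r' + of_real t * idmat r r')"
    using Q psd_add[OF V_family_psd[OF Q] tI] unfolding V_family_def by (auto simp: algebra_simps)
  have "(\<lambda>r r'. (Q 1 r r' + of_real t * idmat r r') + (Q 2 r r' + of_real t * idmat r r'))
      = (\<lambda>r r'. (Q 1 r r' + Q 2 r r') + of_real (2 * t) * idmat r r')"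
    by (auto simp: algebra_simps)
  thus "\<exists>Y. right_inverse m (\<lambda>r r'. (Q 1 r r' + of_real t * idmat r r') + (Q 2 r r' + of_real t * idmat r r')) Y"
    using psd_shift_right_inverse[OF psd_add[OF V_family_psd[OF Q] V_family_psd[OF Q]], where t = "2 * t"] t
    by auto
qed

text \<open>For every \<open>h > 0\<close> there is an array between \<open>q\<close> and \<open>q + h\<close> satisfying the
  inequality: shift by the unit (\<open>h/2\<close>), regularize the second family by \<open>t I\<close> with \<open>t\<close>
  so small that the entries move by at most \<open>h/2\<close> more, and apply the block inequality.\<close>
lemma max_pos_perturbed_instance:
  assumes pos: "max_pos (\<lambda>i j. complex_of_real (q i j))" and h: "h > 0"
    and d: "d \<in> {0,2}" and a: "a \<in> {0,2}" and c: "c \<in> {0,2}"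
  shows "\<exists>q'. (\<forall>i\<in>{1..4}. \<forall>j\<in>{1..4}. q i j \<le> q' i j \<and> q' i j \<le> q i j + h) \<and>
        (\<Sum>i\<in>{1,2}. \<Sum>j\<in>{1,2}. q' (d+i) (d+j)) \<le> (\<Sum>j\<in>{1,2}. \<Sum>k\<in>{1,2}. S q' a c j k)"
proof -
  obtain k m \<alpha> P Q where P: "V_family k P" and Q: "V_family m Q"
    and rep: "\<And>i j. i \<in> {1..4} \<Longrightarrow> j \<in> {1..4} \<Longrightarrow> q i j + h / 2 = coeff_array k m \<alpha> P Q i j"
    by (rule max_pos_representation[OF pos half_gt_zero[OF h]]) blast
  define cI where "cI i = Re (pairing k m \<alpha> (P i) idmat)" for i
  define C where "C = (\<Sum>i\<in>{1..4::nat}. cI i)"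
  have cI0: "0 \<le> cI i" if "i \<in> {1..4}" for i
    unfolding cI_def using pairing_V_family_nonneg[OF P _ that] psd_scaled_idmat[of 1 m] by simp
  have cIC: "cI i \<le> C" if "i \<in> {1..4}" for i
    unfolding C_def by (rule member_le_sum) (use that cI0 in auto)
  have C0: "0 \<le> C" unfolding C_def by (intro sum_nonneg cI0)
  define t where "t = h / (2 * (C + 1))"
  have t: "t > 0" unfolding t_def using h C0 by simp
  have tC: "t * C \<le> h / 2" unfolding t_def using h C0 by (simp add: field_simps)
  define Qt where "Qt = (\<lambda>j r r'. Q j r r' + of_real t * idmat r r')"
  have Qt: "V_family m Qt" unfolding Qt_def by (rule V_family_regularize(1)[OF Q t])
  obtain Y where Y: "right_inverse m (\<lambda>r r'. Qt 1 r r' + Qt 2 r r') Y"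
    using V_family_regularize(2)[OF Q t] unfolding Qt_def by blast
  have q': "coeff_array k m \<alpha> P Qt i j = q i j + h / 2 + t * cI i"
    if "i \<in> {1..4}" "j \<in> {1..4}" for i j
    using rep[OF that] unfolding coeff_array_def Qt_def pairing_add_Z pairing_scale_Z cI_def by simp
  show ?thesis
  proof (intro exI[of _ "coeff_array k m \<alpha> P Qt"] conjI ballI)
    fix i j :: nat assume ij: "i \<in> {1..4}" "j \<in> {1..4}"
    have "t * cI i \<le> h / 2" using cIC[OF ij(1)] t tC by (meson mult_left_mono less_imp_le order_trans)
    moreover have "0 \<le> t * cI i" using cI0[OF ij(1)] t by simp
    ultimately show "q i j \<le> coeff_array k m \<alpha> P Qt i j" "coeff_array k m \<alpha> P Qt i j \<le> q i j + h"
      using q'[OF ij] h by linarith+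
  qed (rule block_inequality[OF P Qt Y d a c])
qed

lemma max_pos_block_bound:
  assumes pos: "max_pos (\<lambda>i j. complex_of_real (q i j))"
    and d: "d \<in> {0,2}" and a: "a \<in> {0,2}" and c: "c \<in> {0,2}"
  shows "(\<Sum>i\<in>{1,2}. \<Sum>j\<in>{1,2}. q (d+i) (d+j)) \<le> (\<Sum>j\<in>{1,2}. \<Sum>k\<in>{1,2}. S q a c j k)"
  by (rule inequality_by_approximation[OF max_pos_nonneg[OF pos] max_pos_perturbed_instance[OF pos _ d a c] d a c])

theorem theorem6p10:
  fixes q :: "nat \<Rightarrow> nat \<Rightarrow> real" and d :: nat
  assumes "max_pos (\<lambda>i j. complex_of_real (q i j))"
    and "d \<in> {0, 2}"
  shows "(\<Sum>i\<in>{1,2}. \<Sum>j\<in>{1,2}. q (d+i) (d+j))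
     \<le> Min {(\<Sum>j\<in>{1,2}. \<Sum>k\<in>{1,2}. S q a c j k) | a c. a \<in> {0,2::nat} \<and> c \<in> {0,2::nat}}"
proof (rule Min.boundedI)
  show "finite {(\<Sum>j\<in>{1,2}. \<Sum>k\<in>{1,2}. S q a c j k) | a c. a \<in> {0,2::nat} \<and> c \<in> {0,2::nat}}"
    by (rule finite_image_set2) auto
  show "{(\<Sum>j\<in>{1,2}. \<Sum>k\<in>{1,2}. S q a c j k) | a c. a \<in> {0,2::nat} \<and> c \<in> {0,2::nat}} \<noteq> {}"
    by blast
next
  fix y assume "y \<in> {(\<Sum>j\<in>{1,2}. \<Sum>k\<in>{1,2}. S q a c j k) | a c. a \<in> {0,2::nat} \<and> c \<in> {0,2::nat}}"
  then obtain a c where "a \<in> {0,2}" "c \<in> {0,2}" "y = (\<Sum>j\<in>{1,2}. \<Sum>k\<in>{1,2}. S q a c j k)" by blast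
  thus "(\<Sum>i\<in>{1,2}. \<Sum>j\<in>{1,2}. q (d+i) (d+j)) \<le> y"
    using max_pos_block_bound[OF assms] by simp
qed

end
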